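(* Let $R$ be an irreducible reduced finite root system with root lattice $X=\mathbb{Z}R$ and $\check X=\operatorname{Hom}(X,\mathbb{Z})$. An automorphism $\sigma\in\operatorname{Aut}(R)$ preserves some base of $R$ if and only if no root $\alpha\in R$ vanishes identically on the fixed-point sublattice $\check X^\sigma=\{\check v\in\check X:\sigma\check v=\check v\}$.
   Context: $\operatorname{Aut}(R)$ denotes the group of linear automorphisms of $\mathbb{R}\otimes X$ preserving $R$, acting on $\check X$ by duality. *)

theory Defs
  imports "HOL-Analysis.Analysis"
begin

text \<open>Finite root systems in the (Bourbaki) abstract sense, in a finite-dimensional
real vector space V, modelled by a type of class euclidean_space (the inner product
is not used).\<close>

definition root_system :: "'a::euclidean_space set \<Rightarrow> bool" where
  "root_system R \<longleftrightarrow>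
     finite R \<and> 0 \<notin> R \<and> span R = UNIV \<and>
     (\<forall>\<alpha>\<in>R. \<exists>c :: 'a \<Rightarrow> real. linear c \<and> c \<alpha> = 2 \<and>
        (\<forall>\<beta>\<in>R. \<beta> - c \<beta> *\<^sub>R \<alpha> \<in> R) \<and>
        (\<forall>\<beta>\<in>R. c \<beta> \<in> \<int>))"

definition reduced_root_system :: "'a::euclidean_space set \<Rightarrow> bool" where
  "reduced_root_system R \<longleftrightarrow> root_system R \<and>
     (\<forall>\<alpha>\<in>R. \<forall>t::real. t *\<^sub>R \<alpha> \<in> R \<longrightarrow> t = 1 \<or> t = -1)"

definition irreducible_root_system :: "'a::euclidean_space set \<Rightarrow> bool" where
  "irreducible_root_system R \<longleftrightarrow> root_system R \<and> R \<noteq> {} \<and>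
     \<not> (\<exists>V1 V2. subspace V1 \<and> subspace V2 \<and> V1 \<noteq> {0} \<and> V2 \<noteq> {0} \<and>
           V1 \<inter> V2 = {0} \<and> {x + y | x y. x \<in> V1 \<and> y \<in> V2} = UNIV \<and>
           R \<subseteq> V1 \<union> V2)"

definition root_lattice :: "'a::euclidean_space set \<Rightarrow> 'a set" where
  "root_lattice R = {\<Sum>\<alpha>\<in>R. of_int (c \<alpha>) *\<^sub>R \<alpha> | c :: 'a \<Rightarrow> int. True}"

text \<open>Coweight lattice Hom(X, \<int>): group homomorphisms X \<rightarrow> \<int>, represented
extensionally (value 0 outside X).\<close>
definition dual_lattice :: "'a::euclidean_space set \<Rightarrow> ('a \<Rightarrow> int) set" where
  "dual_lattice R = {f. (\<forall>x\<in>root_lattice R. \<forall>y\<in>root_lattice R. f (x + y) = f x + f y) \<and>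
                        (\<forall>x. x \<notin> root_lattice R \<longrightarrow> f x = 0)}"

definition root_aut :: "'a::euclidean_space set \<Rightarrow> ('a \<Rightarrow> 'a) \<Rightarrow> bool" where
  "root_aut R \<sigma> \<longleftrightarrow> linear \<sigma> \<and> bij \<sigma> \<and> \<sigma> ` R = R"

text \<open>Action of \<sigma> on the dual lattice by duality: (\<sigma> f)(x) = f(\<sigma>^{-1} x);
fixed-point sublattice.\<close>
definition fixed_dual_lattice :: "'a::euclidean_space set \<Rightarrow> ('a \<Rightarrow> 'a) \<Rightarrow> ('a \<Rightarrow> int) set" where
  "fixed_dual_lattice R \<sigma> = {f \<in> dual_lattice R. \<forall>x\<in>root_lattice R. f (inv \<sigma> x) = f x}"

definition is_base :: "'a::euclidean_space set \<Rightarrow> 'a set \<Rightarrow> bool" where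
  "is_base R \<Delta> \<longleftrightarrow> \<Delta> \<subseteq> R \<and> independent \<Delta> \<and>
     (\<forall>\<beta>\<in>R. \<exists>c :: 'a \<Rightarrow> int. \<beta> = (\<Sum>\<delta>\<in>\<Delta>. of_int (c \<delta>) *\<^sub>R \<delta>) \<and>
        ((\<forall>\<delta>\<in>\<Delta>. c \<delta> \<ge> 0) \<or> (\<forall>\<delta>\<in>\<Delta>. c \<delta> \<le> 0)))"

end

theory Submission
  imports Defs "Jordan_Normal_Form.Determinant"
begin

text \<open>If \<open>\<sigma>\<close> permutes a base \<open>\<Delta>\<close>, the height function (the linear form equal to \<open>1\<close> on \<open>\<Delta>\<close>)
  is \<open>\<sigma>\<close>-invariant, integral on the root lattice and nonzero on every root, so no root vanishes
  on the fixed coweights. Conversely, if no root vanishes on them, a suitable integer combination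
  of fixed coweights vanishes on no root. Since every root has a nonzero integer multiple in the
  lattice of a basis of roots (Cartan matrix), this coweight extends to a real linear form
  \<open>\<phi>\<close>, invariant under \<open>\<sigma>\<close> on the roots. The simple roots of the positive system
  \<open>{\<alpha>. \<phi> \<alpha> > 0}\<close> then form a base permuted by \<open>\<sigma>\<close>; their linear independence comes from
  their being pairwise obtuse for an inner product averaged over the symmetries of \<open>R\<close>.\<close>

section \<open>Coroots and an invariant inner product\<close>

locale finite_root_system =
  fixes R :: "'a::euclidean_space set"
  assumes root_system: "root_system R"
begin

lemma finite_roots: "finite R" and zero_not_root: "0 \<notin> R" and span_roots: "span R = UNIV"
  using root_system unfolding root_system_def by auto

text \<open>Any admissible coroot may be chosen.\<close>
definition coroot :: "'a \<Rightarrow> 'a \<Rightarrow> real" where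
  "coroot \<alpha> = (SOME c. linear c \<and> c \<alpha> = 2 \<and> (\<forall>\<beta>\<in>R. \<beta> - c \<beta> *\<^sub>R \<alpha> \<in> R) \<and> (\<forall>\<beta>\<in>R. c \<beta> \<in> \<int>))"

lemma
  assumes "\<alpha> \<in> R"
  shows linear_coroot: "linear (coroot \<alpha>)"
    and coroot_self: "coroot \<alpha> \<alpha> = 2"
    and root_minus_coroot_in_roots: "\<beta> \<in> R \<Longrightarrow> \<beta> - coroot \<alpha> \<beta> *\<^sub>R \<alpha> \<in> R"
    and coroot_in_Ints: "\<beta> \<in> R \<Longrightarrow> coroot \<alpha> \<beta> \<in> \<int>"
proof -
  have "\<exists>c. linear c \<and> c \<alpha> = 2 \<and> (\<forall>\<beta>\<in>R. \<beta> - c \<beta> *\<^sub>R \<alpha> \<in> R) \<and> (\<forall>\<beta>\<in>R. c \<beta> \<in> \<int>)"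
    using root_system assms unfolding root_system_def by blast
  from someI_ex[OF this]
  show "linear (coroot \<alpha>)" "coroot \<alpha> \<alpha> = 2"
    "\<beta> \<in> R \<Longrightarrow> \<beta> - coroot \<alpha> \<beta> *\<^sub>R \<alpha> \<in> R" "\<beta> \<in> R \<Longrightarrow> coroot \<alpha> \<beta> \<in> \<int>"
    unfolding coroot_def by blast+
qed

definition reflection :: "'a \<Rightarrow> 'a \<Rightarrow> 'a" where
  "reflection \<alpha> x = x - coroot \<alpha> x *\<^sub>R \<alpha>"

lemma linear_reflection: "\<alpha> \<in> R \<Longrightarrow> linear (reflection \<alpha>)"
  unfolding reflection_def using linear_add[OF linear_coroot] linear_scale[OF linear_coroot]
  by (intro linearI) (auto simp: algebra_simps)

lemma reflection_in_roots: "\<alpha> \<in> R \<Longrightarrow> \<beta> \<in> R \<Longrightarrow> reflection \<alpha> \<beta> \<in> R"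
  unfolding reflection_def by (rule root_minus_coroot_in_roots)

lemma reflection_self: "\<alpha> \<in> R \<Longrightarrow> reflection \<alpha> \<alpha> = - \<alpha>"
  unfolding reflection_def by (simp add: coroot_self scaleR_2)

lemma reflection_reflection:
  assumes "\<alpha> \<in> R" shows "reflection \<alpha> (reflection \<alpha> x) = x"
proof -
  have "coroot \<alpha> (reflection \<alpha> x) = - coroot \<alpha> x"
    unfolding reflection_def using assms
    by (simp add: linear_diff[OF linear_coroot] linear_scale[OF linear_coroot] coroot_self)
  then show ?thesis by (simp add: reflection_def)
qed

lemma uminus_in_roots: "\<alpha> \<in> R \<Longrightarrow> - \<alpha> \<in> R"
  by (metis reflection_in_roots reflection_self)

lemma reflection_image: "\<alpha> \<in> R \<Longrightarrow> reflection \<alpha> ` R = R"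
  by (auto simp: reflection_in_roots) (metis image_eqI reflection_in_roots reflection_reflection)

definition root_symmetries :: "('a \<Rightarrow> 'a) set" where
  "root_symmetries = {g. linear g \<and> g ` R = R}"

lemma linear_eq_on_roots: "linear g \<Longrightarrow> linear h \<Longrightarrow> (\<And>x. x \<in> R \<Longrightarrow> g x = h x) \<Longrightarrow> g = h"
  using linear_eq_on_span[of g h R] span_roots by auto

lemma surj_root_symmetry:
  assumes "g \<in> root_symmetries" shows "surj g"
  using assms span_linear_image[of g R] span_roots unfolding root_symmetries_def
  by (metis (mono_tags, lifting) mem_Collect_eq)

lemma finite_root_symmetries: "finite root_symmetries"
proof -
  have "inj_on (\<lambda>g. restrict g R) root_symmetries"
  proof (rule inj_onI)
    fix g h assume "g \<in> root_symmetries" "h \<in> root_symmetries" "restrict g R = restrict h R"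
    then show "g = h"
      using linear_eq_on_roots[of g h] unfolding root_symmetries_def by (metis restrict_apply' mem_Collect_eq)
  qed
  moreover have "(\<lambda>g. restrict g R) ` root_symmetries \<subseteq> R \<rightarrow>\<^sub>E R"
    unfolding root_symmetries_def by auto
  moreover have "finite (R \<rightarrow>\<^sub>E R)"
    using finite_roots by (intro finite_PiE)
  ultimately show ?thesis using finite_imageD finite_subset by metis
qed

lemma reflection_in_root_symmetries: "\<alpha> \<in> R \<Longrightarrow> reflection \<alpha> \<in> root_symmetries"
  unfolding root_symmetries_def using linear_reflection reflection_image by auto

lemma comp_in_root_symmetries:
  "g \<in> root_symmetries \<Longrightarrow> h \<in> root_symmetries \<Longrightarrow> g \<circ> h \<in> root_symmetries"
  using image_image[of g h R] unfolding root_symmetries_def by (auto intro: linear_compose)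

definition invariant_form :: "'a \<Rightarrow> 'a \<Rightarrow> real" where
  "invariant_form x y = (\<Sum>g\<in>root_symmetries. inner (g x) (g y))"

lemma invariant_form_commute: "invariant_form x y = invariant_form y x"
  unfolding invariant_form_def by (simp add: inner_commute)

lemma bilinear_invariant_form: "bilinear invariant_form"
proof -
  have "bilinear (\<lambda>x y. inner (g x) (g y))" if "g \<in> root_symmetries" for g
    using that unfolding root_symmetries_def bilinear_def
    by (auto intro!: linearI simp: linear_add linear_scale inner_add_left inner_add_right)
  then show ?thesis
    unfolding invariant_form_def bilinear_def by (auto intro: linear_compose_sum)
qed

lemma invariant_form_pos:
  assumes "x \<noteq> 0" shows "0 < invariant_form x x"
proof -
  have "id \<in> root_symmetries" unfolding root_symmetries_def by (simp add: linear_id)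
  then have "inner x x \<le> invariant_form x x"
    unfolding invariant_form_def
    using member_le_sum[OF _ _ finite_root_symmetries, of id "\<lambda>g. inner (g x) (g x)"] by simp
  then show ?thesis using assms by (metis inner_gt_zero_iff less_le_trans)
qed

lemma invariant_form_symmetry:
  assumes h: "h \<in> root_symmetries"
  shows "invariant_form (h x) (h y) = invariant_form x y"
proof -
  have inj: "inj_on (\<lambda>g. g \<circ> h) root_symmetries"
  proof (rule inj_onI, rule ext)
    fix g g' y assume "g \<circ> h = g' \<circ> h"
    moreover obtain z where "y = h z" using surj_root_symmetry[OF h] by (metis surjD)
    ultimately show "g y = g' y" by (metis comp_apply)
  qed
  have "(\<lambda>g. g \<circ> h) ` root_symmetries = root_symmetries"
    using endo_inj_surj[OF finite_root_symmetries _ inj] comp_in_root_symmetries[OF _ h] by auto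
  then show ?thesis
    unfolding invariant_form_def using sum.reindex[OF inj, of "\<lambda>g. inner (g x) (g y)"] by simp
qed

lemma invariant_form_coroot:
  assumes "\<alpha> \<in> R"
  shows "invariant_form \<alpha> \<alpha> * coroot \<alpha> x = 2 * invariant_form \<alpha> x"
proof -
  have "invariant_form \<alpha> x = invariant_form (reflection \<alpha> \<alpha>) (reflection \<alpha> x)"
    using invariant_form_symmetry[OF reflection_in_root_symmetries[OF assms]] by simp
  also have "\<dots> = - invariant_form \<alpha> x + coroot \<alpha> x * invariant_form \<alpha> \<alpha>"
    unfolding reflection_self[OF assms] reflection_def[of \<alpha> x] using bilinear_invariant_form
    by (simp add: bilinear_lneg bilinear_rsub bilinear_rmul)
  finally show ?thesis by simp
qed

lemma eq_0_if_coroots_vanish: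
  assumes "S \<subseteq> R" "span S = UNIV" "\<And>\<beta>. \<beta> \<in> S \<Longrightarrow> coroot \<beta> w = 0"
  shows "w = 0"
proof -
  have "invariant_form \<beta> w = 0" if "\<beta> \<in> S" for \<beta>
    using invariant_form_coroot[of \<beta> w] invariant_form_pos[of \<beta>] assms that zero_not_root
    by fastforce
  then have "invariant_form x w = 0" for x
    using linear_eq_on_span[of "\<lambda>x. invariant_form x w" "\<lambda>_. 0" S x] linear_zero
      bilinear_invariant_form assms(2)
    by (auto simp: bilinear_def)
  then show ?thesis using invariant_form_pos by force
qed

lemma invariant_form_Cauchy_Schwarz_strict:
  assumes "x \<noteq> 0" "\<And>t. y \<noteq> t *\<^sub>R x"
  shows "(invariant_form x y)\<^sup>2 < invariant_form x x * invariant_form y y"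
proof -
  let ?B = invariant_form
  define t where "t = ?B x y / ?B x x"
  have px: "?B x x > 0" using invariant_form_pos[OF assms(1)] .
  have "0 < ?B (y - t *\<^sub>R x) (y - t *\<^sub>R x)"
    using assms(2)[of t] by (intro invariant_form_pos) auto
  also have "\<dots> = ?B y y - 2 * t * ?B x y + t\<^sup>2 * ?B x x"
    using bilinear_invariant_form invariant_form_commute[of y x]
    by (simp add: bilinear_lsub bilinear_rsub bilinear_lmul bilinear_rmul power2_eq_square algebra_simps)
  also have "\<dots> = ?B y y - (?B x y)\<^sup>2 / ?B x x"
    unfolding t_def using px by (simp add: field_simps power2_eq_square)
  finally show ?thesis using px by (simp add: field_simps)
qed

lemma coroot_sum:
  "\<beta> \<in> R \<Longrightarrow> coroot \<beta> (\<Sum>j<n. x j *\<^sub>R v j) = (\<Sum>j<n. x j * coroot \<beta> (v j))"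
  by (simp add: linear_sum[OF linear_coroot] linear_scale[OF linear_coroot])

lemma coroot_mult_coroot_less_4:
  assumes roots: "\<alpha> \<in> R" "\<beta> \<in> R" and not_parallel: "\<And>t. \<beta> \<noteq> t *\<^sub>R \<alpha>"
  shows "coroot \<alpha> \<beta> * coroot \<beta> \<alpha> < 4"
proof -
  let ?B = invariant_form
  have "\<alpha> \<noteq> 0" "\<beta> \<noteq> 0" using roots zero_not_root by auto
  then have form_pos: "0 < ?B \<alpha> \<alpha> * ?B \<beta> \<beta>" by (simp add: invariant_form_pos)
  have "?B \<alpha> \<alpha> * ?B \<beta> \<beta> * (coroot \<alpha> \<beta> * coroot \<beta> \<alpha>) = 4 * (?B \<alpha> \<beta>)\<^sup>2"
    using invariant_form_coroot[OF roots(1), of \<beta>] invariant_form_coroot[OF roots(2), of \<alpha>]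
      invariant_form_commute[of \<beta> \<alpha>]
    by (simp add: power2_eq_square algebra_simps)
  also have "\<dots> < ?B \<alpha> \<alpha> * ?B \<beta> \<beta> * 4"
    using invariant_form_Cauchy_Schwarz_strict[OF _ not_parallel] roots zero_not_root by auto
  finally show ?thesis using form_pos by (simp add: mult_less_cancel_left_pos)
qed

text \<open>The two coroot pairings are positive integers with product less than \<open>4\<close>, so one of them
  is \<open>1\<close> and the corresponding reflection produces \<open>\<beta> - \<alpha>\<close> or \<open>\<alpha> - \<beta>\<close>.\<close>
lemma diff_in_roots_if_acute:
  assumes roots: "\<alpha> \<in> R" "\<beta> \<in> R" and not_parallel: "\<And>t. \<beta> \<noteq> t *\<^sub>R \<alpha>"
    and acute: "0 < invariant_form \<alpha> \<beta>"
  shows "\<beta> - \<alpha> \<in> R"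
proof -
  obtain a where a: "coroot \<alpha> \<beta> = of_int a" using coroot_in_Ints[OF roots] Ints_cases by metis
  obtain b where b: "coroot \<beta> \<alpha> = of_int b" using coroot_in_Ints[OF roots(2,1)] Ints_cases by metis
  have "\<alpha> \<noteq> 0" "\<beta> \<noteq> 0" using roots zero_not_root by auto
  have "0 < invariant_form \<alpha> \<alpha> * coroot \<alpha> \<beta>" "0 < invariant_form \<beta> \<beta> * coroot \<beta> \<alpha>"
    using invariant_form_coroot[OF roots(1), of \<beta>] invariant_form_coroot[OF roots(2), of \<alpha>]
      invariant_form_commute[of \<beta> \<alpha>] acute by simp_all
  then have "0 < coroot \<alpha> \<beta>" "0 < coroot \<beta> \<alpha>"
    using \<open>\<alpha> \<noteq> 0\<close> \<open>\<beta> \<noteq> 0\<close> by (auto elim!: zero_less_mult_pos intro: invariant_form_pos)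
  then have "0 < a" "0 < b" using a b by simp_all
  have "a * b < 4"
    using coroot_mult_coroot_less_4[OF roots not_parallel] a b by (simp flip: of_int_mult)
  have "a = 1 \<or> b = 1"
  proof (rule ccontr)
    assume "\<not> ?thesis"
    then have "2 * 2 \<le> a * b" using \<open>0 < a\<close> \<open>0 < b\<close> by (intro mult_mono) auto
    with \<open>a * b < 4\<close> show False by simp
  qed
  then show ?thesis
  proof
    assume "a = 1"
    then have "reflection \<alpha> \<beta> = \<beta> - \<alpha>" unfolding reflection_def using a by simp
    then show ?thesis using reflection_in_roots[OF roots] by simp
  next
    assume "b = 1"
    then have "reflection \<beta> \<alpha> = - (\<beta> - \<alpha>)" unfolding reflection_def using b by simp
    then show ?thesis using uminus_in_roots[OF reflection_in_roots[OF roots(2,1)]] by simp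
  qed
qed

lemma nonneg_combinations_eq_0_if_obtuse:
  assumes "finite P" "finite N"
    and obtuse: "\<And>\<delta> \<delta>'. \<delta> \<in> P \<Longrightarrow> \<delta>' \<in> N \<Longrightarrow> invariant_form \<delta> \<delta>' \<le> 0"
    and "\<And>\<delta>. \<delta> \<in> P \<Longrightarrow> 0 \<le> u \<delta>" "\<And>\<delta>. \<delta> \<in> N \<Longrightarrow> 0 \<le> w \<delta>"
    and eq: "(\<Sum>\<delta>\<in>P. u \<delta> *\<^sub>R \<delta>) = (\<Sum>\<delta>\<in>N. w \<delta> *\<^sub>R \<delta>)"
  shows "(\<Sum>\<delta>\<in>P. u \<delta> *\<^sub>R \<delta>) = 0"
proof (rule ccontr)
  define v where "v = (\<Sum>\<delta>\<in>P. u \<delta> *\<^sub>R \<delta>)"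
  assume "v \<noteq> 0"
  then have "0 < invariant_form v v" by (rule invariant_form_pos)
  also have "invariant_form v v = invariant_form v (\<Sum>\<delta>\<in>N. w \<delta> *\<^sub>R \<delta>)"
    using eq unfolding v_def[symmetric] by simp
  also have "\<dots> = (\<Sum>(\<delta>, \<delta>')\<in>P \<times> N. u \<delta> * w \<delta>' * invariant_form \<delta> \<delta>')"
    unfolding v_def bilinear_sum[OF bilinear_invariant_form]
    by (simp add: bilinear_lmul[OF bilinear_invariant_form] bilinear_rmul[OF bilinear_invariant_form]
        mult.assoc mult.left_commute case_prod_unfold)
  also have "\<dots> \<le> 0"
    using assms(4,5) obtuse
    by (intro sum_nonpos) (auto simp: mult_nonneg_nonpos)
  finally show False by simp
qed

end

section \<open>Integrality\<close>

lemma independent_nth_sum_eq_0D: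
  assumes "independent (set bs)" "distinct bs"
    and "(\<Sum>j<length bs. x j *\<^sub>R bs!j) = 0" "j < length bs"
  shows "x j = 0"
proof -
  let ?n = "length bs"
  have bij: "bij_betw ((!) bs) {..<?n} (set bs)"
    using bij_betw_nth[OF assms(2)] by simp
  define u where "u = x \<circ> the_inv_into {..<?n} ((!) bs)"
  have u_nth: "u (bs!i) = x i" if "i < ?n" for i
    using the_inv_into_f_f[OF bij_betw_imp_inj_on[OF bij]] that by (auto simp: u_def)
  have "(\<Sum>\<beta>\<in>set bs. u \<beta> *\<^sub>R \<beta>) = (\<Sum>i<?n. x i *\<^sub>R bs!i)"
    using sum.reindex_bij_betw[OF bij, of "\<lambda>\<beta>. u \<beta> *\<^sub>R \<beta>"] u_nth by simp
  then have "\<forall>v\<in>set bs. u v = 0"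
    using assms(1,3) dependent_finite[of "set bs"] by auto
  then have "u (bs!j) = 0" using assms(4) by simp
  then show ?thesis using u_nth[OF assms(4)] by simp
qed

lemma adj_mat_mult_vec:
  fixes A :: "'b::comm_ring_1 mat"
  assumes A: "A \<in> carrier_mat n n" and y: "y \<in> carrier_vec n" and "i < n"
  shows "(A *\<^sub>v (adj_mat A *\<^sub>v y)) $ i = Determinant.det A * y $ i"
proof -
  have "(A *\<^sub>v (adj_mat A *\<^sub>v y)) $ i = ((Determinant.det A \<cdot>\<^sub>m 1\<^sub>m n) *\<^sub>v y) $ i"
    using A adj_mat[OF A] y by (simp flip: assoc_mult_mat_vec)
  also have "\<dots> = (\<Sum>j = 0..<n. Determinant.det A * (if j = i then 1 else 0) * y $ j)"
    using assms by (simp add: scalar_prod_def)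
  also have "\<dots> = (\<Sum>j = 0..<n. if j = i then Determinant.det A * y $ j else 0)"
    by (rule sum.cong) auto
  finally show ?thesis using \<open>i < n\<close> by simp
qed

context finite_root_system
begin

definition cartan_matrix :: "'a list \<Rightarrow> int mat" where
  "cartan_matrix bs = mat (length bs) (length bs) (\<lambda>(i, j). \<lfloor>coroot (bs!i) (bs!j)\<rfloor>)"

context
  fixes bs :: "'a list"
  assumes basis: "set bs \<subseteq> R" "distinct bs" "independent (set bs)" "span (set bs) = UNIV"
begin

lemma basis_nth_in_roots: "i < length bs \<Longrightarrow> bs!i \<in> R"
  using basis(1) by auto

lemma of_int_floor_coroot_basis:
  "i < length bs \<Longrightarrow> \<beta> \<in> R \<Longrightarrow> of_int \<lfloor>coroot (bs!i) \<beta>\<rfloor> = coroot (bs!i) \<beta>"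
  using coroot_in_Ints basis_nth_in_roots by (metis Ints_cases floor_of_int)

lemma coroot_basis_combination:
  assumes "i < length bs"
  shows "coroot (bs!i) (\<Sum>j<length bs. x j *\<^sub>R bs!j) =
    (\<Sum>j<length bs. of_int (cartan_matrix bs $$ (i, j)) * x j)"
  unfolding coroot_sum[OF basis_nth_in_roots[OF assms]] cartan_matrix_def using assms
  by (intro sum.cong) (auto simp: of_int_floor_coroot_basis basis_nth_in_roots)

lemma eq_0_if_basis_coroots_vanish: "(\<And>i. i < length bs \<Longrightarrow> coroot (bs!i) w = 0) \<Longrightarrow> w = 0"
  using eq_0_if_coroots_vanish[OF basis(1,4)] by (metis in_set_conv_nth)

lemma det_cartan_matrix_nonzero: "Determinant.det (cartan_matrix bs) \<noteq> 0"
proof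
  let ?n = "length bs" and ?C = "map_mat real_of_int (cartan_matrix bs)"
  assume "Determinant.det (cartan_matrix bs) = 0"
  then have "Determinant.det ?C = 0" by simp
  then obtain v where v: "v \<in> carrier_vec ?n" "v \<noteq> 0\<^sub>v ?n" "?C *\<^sub>v v = 0\<^sub>v ?n"
    using det_0_iff_vec_prod_zero_field[of ?C ?n] by (auto simp: cartan_matrix_def)
  have "(\<Sum>j<?n. v $ j *\<^sub>R bs!j) = 0"
  proof (rule eq_0_if_basis_coroots_vanish)
    fix i assume i: "i < ?n"
    have "(?C *\<^sub>v v) $ i = 0" using v(3) i by simp
    then show "coroot (bs!i) (\<Sum>j<?n. v $ j *\<^sub>R bs!j) = 0"
      using i v(1) unfolding coroot_basis_combination[OF i]
      by (simp add: cartan_matrix_def scalar_prod_def lessThan_atLeast0)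
  qed
  then have "v = 0\<^sub>v ?n"
    using independent_nth_sum_eq_0D[OF basis(3,2)] v(1) by (intro eq_vecI) auto
  with v(2) show False ..
qed

text \<open>Multiplying the integer coroot coordinates of \<open>\<alpha>\<close> by the adjugate of the Cartan matrix
  gives integer coordinates of \<open>det C \<cdot> \<alpha>\<close>.\<close>
lemma int_multiple_of_root_in_basis_lattice:
  assumes "\<alpha> \<in> R"
  shows "\<exists>N k. N \<noteq> (0::int) \<and> of_int N *\<^sub>R \<alpha> = (\<Sum>j<length bs. of_int (k j) *\<^sub>R bs!j)"
proof -
  let ?n = "length bs" and ?C = "cartan_matrix bs"
  define y where "y = vec ?n (\<lambda>i. \<lfloor>coroot (bs!i) \<alpha>\<rfloor>)"
  define k where "k = adj_mat ?C *\<^sub>v y"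
  have C: "?C \<in> carrier_mat ?n ?n" and y: "y \<in> carrier_vec ?n"
    unfolding cartan_matrix_def y_def by simp_all
  have k: "k \<in> carrier_vec ?n" unfolding k_def using adj_mat(1)[OF C] y by simp
  have "coroot (bs!i) (\<Sum>j<?n. of_int (k $ j) *\<^sub>R bs!j) =
        coroot (bs!i) (of_int (Determinant.det ?C) *\<^sub>R \<alpha>)" if i: "i < ?n" for i
  proof -
    have "coroot (bs!i) (\<Sum>j<?n. of_int (k $ j) *\<^sub>R bs!j) = of_int ((?C *\<^sub>v k) $ i)"
      unfolding coroot_basis_combination[OF i] using i C k
      by (simp add: scalar_prod_def lessThan_atLeast0)
    also have "\<dots> = of_int (Determinant.det ?C) * coroot (bs!i) \<alpha>"
      using adj_mat_mult_vec[OF C y i] of_int_floor_coroot_basis[OF i assms] i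
      unfolding k_def y_def by simp
    finally show ?thesis
      using linear_scale[OF linear_coroot[OF basis_nth_in_roots[OF i]]] by simp
  qed
  then have "(\<Sum>j<?n. of_int (k $ j) *\<^sub>R bs!j) = of_int (Determinant.det ?C) *\<^sub>R \<alpha>"
    using eq_0_if_basis_coroots_vanish[of "(\<Sum>j<?n. of_int (k $ j) *\<^sub>R bs!j) - of_int (Determinant.det ?C) *\<^sub>R \<alpha>"]
      linear_diff[OF linear_coroot[OF basis_nth_in_roots]] by auto
  then show ?thesis
    using det_cartan_matrix_nonzero by (intro exI[of _ "Determinant.det ?C"] exI[of _ "\<lambda>j. k $ j"]) simp
qed

end

lemma root_lattice_sum_roots: "(\<Sum>\<beta>\<in>R. of_int (c \<beta>) *\<^sub>R \<beta>) \<in> root_lattice R"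
  unfolding root_lattice_def by auto

lemma root_in_root_lattice:
  assumes "\<alpha> \<in> R" shows "\<alpha> \<in> root_lattice R"
proof -
  have "(\<Sum>\<beta>\<in>R. of_int (if \<beta> = \<alpha> then 1 else 0) *\<^sub>R \<beta>) = (\<Sum>\<beta>\<in>R. if \<beta> = \<alpha> then \<beta> else 0)"
    by (intro sum.cong) auto
  then have "(\<Sum>\<beta>\<in>R. of_int (if \<beta> = \<alpha> then 1 else 0) *\<^sub>R \<beta>) = \<alpha>"
    using assms finite_roots by simp
  then show ?thesis using root_lattice_sum_roots by metis
qed

lemma zero_in_root_lattice: "0 \<in> root_lattice R"
  using root_lattice_sum_roots[of "\<lambda>_. 0"] by simp

lemma root_lattice_add:
  assumes "x \<in> root_lattice R" "y \<in> root_lattice R" shows "x + y \<in> root_lattice R"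
proof -
  obtain c d where "x = (\<Sum>\<beta>\<in>R. of_int (c \<beta>) *\<^sub>R \<beta>)" "y = (\<Sum>\<beta>\<in>R. of_int (d \<beta>) *\<^sub>R \<beta>)"
    using assms unfolding root_lattice_def by auto
  then have "x + y = (\<Sum>\<beta>\<in>R. of_int (c \<beta> + d \<beta>) *\<^sub>R \<beta>)"
    by (simp add: sum.distrib scaleR_add_left)
  then show ?thesis using root_lattice_sum_roots by metis
qed

lemma root_lattice_scale:
  assumes "x \<in> root_lattice R" shows "of_int k *\<^sub>R x \<in> root_lattice R"
proof -
  obtain c where "x = (\<Sum>\<beta>\<in>R. of_int (c \<beta>) *\<^sub>R \<beta>)"
    using assms unfolding root_lattice_def by auto
  then have "of_int k *\<^sub>R x = (\<Sum>\<beta>\<in>R. of_int (k * c \<beta>) *\<^sub>R \<beta>)"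
    by (simp add: scaleR_sum_right)
  then show ?thesis using root_lattice_sum_roots by metis
qed

lemma root_lattice_int_combination:
  "finite S \<Longrightarrow> (\<And>i. i \<in> S \<Longrightarrow> x i \<in> root_lattice R) \<Longrightarrow>
    (\<Sum>i\<in>S. of_int (k i) *\<^sub>R x i) \<in> root_lattice R"
  by (induction S rule: finite_induct)
    (auto intro: zero_in_root_lattice root_lattice_add root_lattice_scale)

lemma root_lattice_image:
  assumes "linear \<tau>" "\<tau> ` R \<subseteq> R" "x \<in> root_lattice R"
  shows "\<tau> x \<in> root_lattice R"
proof -
  obtain c where "x = (\<Sum>\<beta>\<in>R. of_int (c \<beta>) *\<^sub>R \<beta>)"
    using assms(3) unfolding root_lattice_def by auto
  then have "\<tau> x = (\<Sum>\<beta>\<in>R. of_int (c \<beta>) *\<^sub>R \<tau> \<beta>)"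
    by (simp add: linear_sum[OF assms(1)] linear_scale[OF assms(1)])
  also have "\<dots> \<in> root_lattice R"
    using assms(2) finite_roots by (intro root_lattice_int_combination root_in_root_lattice) auto
  finally show ?thesis .
qed

context
  fixes f assumes f: "f \<in> dual_lattice R"
begin

lemma dual_lattice_add:
  "x \<in> root_lattice R \<Longrightarrow> y \<in> root_lattice R \<Longrightarrow> f (x + y) = f x + f y"
  using f unfolding dual_lattice_def by auto

lemma dual_lattice_zero: "f 0 = 0"
  using dual_lattice_add[OF zero_in_root_lattice zero_in_root_lattice] by simp

lemma dual_lattice_scale:
  assumes x: "x \<in> root_lattice R" shows "f (of_int k *\<^sub>R x) = k * f x"
proof (induction k rule: int_induct[where k = 0])
  case base
  show ?case using dual_lattice_zero by simp
next
  case (step1 i)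
  then show ?case
    using dual_lattice_add[OF root_lattice_scale[OF x, of i] x] by (simp add: algebra_simps)
next
  case (step2 i)
  then show ?case
    using dual_lattice_add[OF root_lattice_scale[OF x, of "i - 1"] x] by (simp add: algebra_simps)
qed

lemma dual_lattice_int_combination:
  "finite S \<Longrightarrow> (\<And>i. i \<in> S \<Longrightarrow> x i \<in> root_lattice R) \<Longrightarrow>
    f (\<Sum>i\<in>S. of_int (k i) *\<^sub>R x i) = (\<Sum>i\<in>S. k i * f (x i))"
proof (induction S rule: finite_induct)
  case empty
  show ?case using dual_lattice_zero by simp
next
  case (insert i S)
  have xi: "x i \<in> root_lattice R" using insert.prems by simp
  have "(\<Sum>j\<in>S. of_int (k j) *\<^sub>R x j) \<in> root_lattice R"
    using insert by (intro root_lattice_int_combination) auto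
  then show ?case
    using insert dual_lattice_add[OF root_lattice_scale[OF xi]] dual_lattice_scale[OF xi] by simp
qed

text \<open>Every root has a nonzero integer multiple in the lattice spanned by a basis of roots, so
  the linear extension of \<open>f\<close> from such a basis agrees with \<open>f\<close> on all roots.\<close>
lemma dual_lattice_extends_linear:
  "\<exists>\<phi>::'a \<Rightarrow> real. linear \<phi> \<and> (\<forall>\<alpha>\<in>R. \<phi> \<alpha> = of_int (f \<alpha>))"
proof -
  obtain b where b: "b \<subseteq> R" "independent b" "R \<subseteq> span b"
    using maximal_independent_subset[of R] by blast
  have "span b = UNIV"
    using span_roots span_mono[OF b(3)] by (simp add: span_span top_unique)
  moreover obtain bs where bs: "set bs = b" "distinct bs"
    using finite_distinct_list finite_subset[OF b(1) finite_roots] by blast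
  moreover obtain \<phi> :: "'a \<Rightarrow> real" where \<phi>: "linear \<phi>" "\<And>x. x \<in> b \<Longrightarrow> \<phi> x = of_int (f x)"
    using linear_independent_extend[OF b(2), of "\<lambda>x. of_int (f x)"] by auto
  ultimately have "\<phi> \<alpha> = of_int (f \<alpha>)" if \<alpha>: "\<alpha> \<in> R" for \<alpha>
  proof -
    let ?n = "length bs"
    have bs_lattice: "bs!j \<in> root_lattice R" if "j < ?n" for j
      using bs(1) b(1) that nth_mem root_in_root_lattice by blast
    obtain N k where N: "N \<noteq> 0" and Nk: "of_int N *\<^sub>R \<alpha> = (\<Sum>j<?n. of_int (k j) *\<^sub>R bs!j)"
      using int_multiple_of_root_in_basis_lattice[of bs \<alpha>] bs b \<alpha> \<open>span b = UNIV\<close> by auto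
    have "of_int N * \<phi> \<alpha> = (\<Sum>j<?n. of_int (k j) * \<phi> (bs!j))"
      using arg_cong[OF Nk, of \<phi>] by (simp add: linear_sum[OF \<phi>(1)] linear_scale[OF \<phi>(1)])
    also have "\<dots> = of_int (\<Sum>j<?n. k j * f (bs!j))"
      unfolding of_int_sum of_int_mult using \<phi>(2) bs(1) by (intro sum.cong) auto
    also have "\<dots> = of_int (f (of_int N *\<^sub>R \<alpha>))"
      unfolding Nk using dual_lattice_int_combination[of "{..<?n}" "\<lambda>j. bs!j" k] bs_lattice by simp
    also have "\<dots> = of_int (N * f \<alpha>)"
      using dual_lattice_scale[OF root_in_root_lattice[OF \<alpha>]] by simp
    finally show ?thesis using N by simp
  qed
  then show ?thesis using \<phi>(1) by blast
qed

end

end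

text \<open>Induction on \<open>S\<close>: to the current function add a multiple of a new member, with a
  factor exceeding all absolute values of the current function on \<open>S\<close>.\<close>
lemma int_module_nonvanishing_member:
  fixes F :: "('a \<Rightarrow> int) set"
  assumes zero: "(\<lambda>_. 0) \<in> F"
    and comb: "\<And>f g t. f \<in> F \<Longrightarrow> g \<in> F \<Longrightarrow> (\<lambda>x. f x + t * g x) \<in> F"
    and "finite S" and nonvanishing: "\<And>\<alpha>. \<alpha> \<in> S \<Longrightarrow> \<exists>f\<in>F. f \<alpha> \<noteq> 0"
  shows "\<exists>f\<in>F. \<forall>\<alpha>\<in>S. f \<alpha> \<noteq> 0"
  using \<open>finite S\<close> nonvanishing
proof (induction S rule: finite_induct)
  case empty
  then show ?case using zero by blast
next
  case (insert \<beta> S)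
  then obtain g where g: "g \<in> F" "\<forall>\<alpha>\<in>S. g \<alpha> \<noteq> 0" by blast
  obtain h where h: "h \<in> F" "h \<beta> \<noteq> 0" using insert.prems by blast
  define t where "t = 1 + (\<Sum>\<alpha>\<in>insert \<beta> S. \<bar>g \<alpha>\<bar>)"
  have "g \<alpha> + t * h \<alpha> \<noteq> 0" if \<alpha>: "\<alpha> \<in> insert \<beta> S" "h \<alpha> \<noteq> 0" for \<alpha>
  proof
    assume "g \<alpha> + t * h \<alpha> = 0"
    then have "\<bar>t * h \<alpha>\<bar> = \<bar>g \<alpha>\<bar>" by (simp add: add_eq_0_iff2)
    moreover have "\<bar>g \<alpha>\<bar> \<le> (\<Sum>\<alpha>\<in>insert \<beta> S. \<bar>g \<alpha>\<bar>)"
      using \<alpha>(1) insert.hyps(1) by (intro member_le_sum) auto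
    then have "\<bar>g \<alpha>\<bar> < t" unfolding t_def by linarith
    moreover have "t \<le> \<bar>t * h \<alpha>\<bar>"
    proof -
      have "0 < t" using sum_nonneg[of "insert \<beta> S" "\<lambda>\<alpha>. \<bar>g \<alpha>\<bar>"] unfolding t_def by linarith
      moreover have "1 \<le> \<bar>h \<alpha>\<bar>" using \<alpha>(2) by (simp add: int_one_le_iff_zero_less)
      ultimately show ?thesis by (simp add: abs_mult)
    qed
    ultimately show False by linarith
  qed
  then have "\<forall>\<alpha>\<in>insert \<beta> S. g \<alpha> + t * h \<alpha> \<noteq> 0" using g(2) h(2) by fastforce
  with comb[OF g(1) h(1)] show ?case by (intro bexI[where x = "\<lambda>x. g x + t * h x"]) auto
qed

text \<open>\<open>inv_into UNIV\<close> is \<open>Hilbert_Choice.inv\<close>, whose syntax HOL-Algebra overrides.\<close>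
lemma
  assumes "root_aut R \<sigma>"
  shows inj_root_aut: "inj \<sigma>"
    and linear_inv_root_aut: "linear (inv_into UNIV \<sigma>)"
    and inv_root_aut_image: "inv_into UNIV \<sigma> ` R = R"
proof -
  show inj: "inj \<sigma>" using assms bij_is_inj unfolding root_aut_def by auto
  show "linear (inv_into UNIV \<sigma>)" using assms inj inj_linear_imp_inv_linear unfolding root_aut_def by auto
  show "inv_into UNIV \<sigma> ` R = R" using assms image_inv_f_f[OF inj, of R] unfolding root_aut_def by auto
qed

context finite_root_system
begin

lemma fixed_dual_lattice_zero: "(\<lambda>_. 0) \<in> fixed_dual_lattice R \<sigma>"
  unfolding fixed_dual_lattice_def dual_lattice_def by auto

lemma fixed_dual_lattice_comb:
  "f \<in> fixed_dual_lattice R \<sigma> \<Longrightarrow> g \<in> fixed_dual_lattice R \<sigma> \<Longrightarrow>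
    (\<lambda>x. f x + t * g x) \<in> fixed_dual_lattice R \<sigma>"
  unfolding fixed_dual_lattice_def dual_lattice_def by (auto simp: algebra_simps)

lemma span_base:
  assumes "is_base R \<Delta>" shows "span \<Delta> = UNIV"
proof -
  have "R \<subseteq> span \<Delta>"
  proof
    fix \<beta> assume "\<beta> \<in> R"
    then obtain c where "\<beta> = (\<Sum>\<delta>\<in>\<Delta>. of_int (c \<delta>) *\<^sub>R \<delta>)"
      using assms unfolding is_base_def by blast
    then show "\<beta> \<in> span \<Delta>" by (simp add: span_sum span_scale span_base)
  qed
  then show ?thesis using span_roots span_mono[of R "span \<Delta>"] by (simp add: span_span top_unique)
qed

text \<open>The height of a root with respect to a base is a sum of coefficients of one sign, not all
  zero.\<close>
lemma height_of_root:
  fixes \<psi> :: "'a \<Rightarrow> real"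
  assumes "is_base R \<Delta>" "linear \<psi>" "\<And>\<delta>. \<delta> \<in> \<Delta> \<Longrightarrow> \<psi> \<delta> = 1" "\<beta> \<in> R"
  shows "\<exists>m. \<psi> \<beta> = of_int m \<and> m \<noteq> 0"
proof -
  obtain c where c: "\<beta> = (\<Sum>\<delta>\<in>\<Delta>. of_int (c \<delta>) *\<^sub>R \<delta>)"
    and sign: "(\<forall>\<delta>\<in>\<Delta>. c \<delta> \<ge> 0) \<or> (\<forall>\<delta>\<in>\<Delta>. c \<delta> \<le> 0)"
    using assms(1,4) unfolding is_base_def by blast
  have finite: "finite \<Delta>"
    using assms(1) finite_roots finite_subset unfolding is_base_def by blast
  have "\<psi> \<beta> = of_int (\<Sum>\<delta>\<in>\<Delta>. c \<delta>)"
    unfolding c using assms(3)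
    by (simp add: linear_sum[OF assms(2)] linear_scale[OF assms(2)] real_scaleR_def)
  moreover have "(\<Sum>\<delta>\<in>\<Delta>. c \<delta>) \<noteq> 0"
  proof
    assume sum_0: "(\<Sum>\<delta>\<in>\<Delta>. c \<delta>) = 0"
    have "\<forall>\<delta>\<in>\<Delta>. c \<delta> = 0"
    proof (cases "\<forall>\<delta>\<in>\<Delta>. c \<delta> \<ge> 0")
      case True
      then show ?thesis using sum_nonneg_eq_0_iff[OF finite] sum_0 by blast
    next
      case False
      then have "\<forall>\<delta>\<in>\<Delta>. - c \<delta> \<ge> 0" using sign by auto
      moreover have "(\<Sum>\<delta>\<in>\<Delta>. - c \<delta>) = 0" using sum_0 by (simp add: sum_negf)
      ultimately show ?thesis using sum_nonneg_eq_0_iff[OF finite, of "\<lambda>\<delta>. - c \<delta>"] by auto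
    qed
    then have "\<beta> = 0" unfolding c by simp
    then show False using assms(4) zero_not_root by simp
  qed
  ultimately show ?thesis by blast
qed

lemma integral_on_root_lattice:
  fixes \<psi> :: "'a \<Rightarrow> real"
  assumes "linear \<psi>" "\<And>\<beta>. \<beta> \<in> R \<Longrightarrow> \<psi> \<beta> \<in> \<int>" "x \<in> root_lattice R"
  shows "\<psi> x \<in> \<int>"
proof -
  obtain c where "x = (\<Sum>\<beta>\<in>R. of_int (c \<beta>) *\<^sub>R \<beta>)"
    using assms(3) unfolding root_lattice_def by auto
  then have "\<psi> x = (\<Sum>\<beta>\<in>R. of_int (c \<beta>) * \<psi> \<beta>)"
    by (simp add: linear_sum[OF assms(1)] linear_scale[OF assms(1)])
  also have "\<dots> \<in> \<int>" using assms(2) by (intro Ints_sum Ints_mult) auto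
  finally show ?thesis .
qed

lemma floor_in_fixed_dual_lattice:
  fixes \<psi> :: "'a \<Rightarrow> real"
  assumes \<sigma>: "root_aut R \<sigma>" and \<psi>: "linear \<psi>" "\<And>\<beta>. \<beta> \<in> R \<Longrightarrow> \<psi> \<beta> \<in> \<int>"
    and invariant: "\<And>x. \<psi> (inv_into UNIV \<sigma> x) = \<psi> x"
  shows "(\<lambda>x. if x \<in> root_lattice R then \<lfloor>\<psi> x\<rfloor> else 0) \<in> fixed_dual_lattice R \<sigma>"
    (is "?f \<in> _")
proof -
  have "?f (x + y) = ?f x + ?f y" if xy: "x \<in> root_lattice R" "y \<in> root_lattice R" for x y
  proof -
    obtain m where m: "\<psi> y = of_int m"
      using integral_on_root_lattice[OF \<psi> xy(2)] by (blast elim: Ints_cases)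
    have "\<lfloor>\<psi> (x + y)\<rfloor> = \<lfloor>\<psi> x\<rfloor> + \<lfloor>\<psi> y\<rfloor>"
      using linear_add[OF \<psi>(1), of x y] m by simp
    then show ?thesis using xy root_lattice_add[OF xy] by simp
  qed
  then have "?f \<in> dual_lattice R"
    unfolding dual_lattice_def mem_Collect_eq by simp
  moreover have "?f (inv_into UNIV \<sigma> x) = ?f x" if x: "x \<in> root_lattice R" for x
  proof -
    have "inv_into UNIV \<sigma> x \<in> root_lattice R"
      using root_lattice_image[OF linear_inv_root_aut[OF \<sigma>] _ x] inv_root_aut_image[OF \<sigma>] by simp
    then show ?thesis using x invariant by simp
  qed
  ultimately show ?thesis
    unfolding fixed_dual_lattice_def mem_Collect_eq by simp
qed

lemma fixed_base_imp_nonvanishing_fixed_coweight: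
  assumes \<sigma>: "root_aut R \<sigma>" and \<Delta>: "is_base R \<Delta>" "\<sigma> ` \<Delta> = \<Delta>"
  shows "\<exists>f\<in>fixed_dual_lattice R \<sigma>. \<forall>\<alpha>\<in>R. f \<alpha> \<noteq> 0"
proof -
  have "independent \<Delta>" using \<Delta>(1) unfolding is_base_def by blast
  then obtain \<psi> :: "'a \<Rightarrow> real" where \<psi>: "linear \<psi>" "\<And>\<delta>. \<delta> \<in> \<Delta> \<Longrightarrow> \<psi> \<delta> = 1"
    using linear_independent_extend[of \<Delta> "\<lambda>_. 1"] by blast
  have height: "\<exists>m. \<psi> \<beta> = of_int m \<and> m \<noteq> 0" if "\<beta> \<in> R" for \<beta>
    using height_of_root[OF \<Delta>(1) \<psi> that] .
  have "inv_into UNIV \<sigma> ` \<Delta> = \<Delta>"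
    using \<Delta>(2) image_inv_f_f[OF inj_root_aut[OF \<sigma>], of \<Delta>] by simp
  have invariant: "\<psi> (inv_into UNIV \<sigma> x) = \<psi> x" for x
  proof -
    have "(\<psi> \<circ> inv_into UNIV \<sigma>) x = \<psi> x"
    proof (rule linear_eq_on_span[where B = \<Delta>])
      show "linear (\<psi> \<circ> inv_into UNIV \<sigma>)"
        by (rule linear_compose[OF linear_inv_root_aut[OF \<sigma>] \<psi>(1)])
      show "x \<in> span \<Delta>" using span_base[OF \<Delta>(1)] by simp
      fix y assume "y \<in> \<Delta>"
      then show "(\<psi> \<circ> inv_into UNIV \<sigma>) y = \<psi> y"
        using \<open>inv_into UNIV \<sigma> ` \<Delta> = \<Delta>\<close> \<psi>(2) by auto
    qed (rule \<psi>(1))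
    then show ?thesis by simp
  qed
  define f where "f x = (if x \<in> root_lattice R then \<lfloor>\<psi> x\<rfloor> else 0)" for x
  have "\<forall>\<alpha>\<in>R. f \<alpha> \<noteq> 0"
    unfolding f_def using height root_in_root_lattice by fastforce
  moreover have "f \<in> fixed_dual_lattice R \<sigma>"
    unfolding f_def using invariant
    by (intro floor_in_fixed_dual_lattice[OF \<sigma> \<psi>(1)]) (auto dest!: height)
  ultimately show ?thesis ..
qed

end

section \<open>Positive systems and simple roots\<close>

locale positive_system = finite_root_system +
  fixes \<phi> :: "'a \<Rightarrow> real"
  assumes reduced: "reduced_root_system R"
    and linear_phi: "linear \<phi>"
    and phi_root_nonzero: "\<And>\<alpha>. \<alpha> \<in> R \<Longrightarrow> \<phi> \<alpha> \<noteq> 0"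
begin

definition positive_roots :: "'a set" where
  "positive_roots = {\<alpha>\<in>R. 0 < \<phi> \<alpha>}"

definition decomposable :: "'a \<Rightarrow> bool" where
  "decomposable \<alpha> \<longleftrightarrow> (\<exists>\<beta>\<in>positive_roots. \<exists>\<gamma>\<in>positive_roots. \<alpha> = \<beta> + \<gamma>)"

definition simple_roots :: "'a set" where
  "simple_roots = {\<alpha>\<in>positive_roots. \<not> decomposable \<alpha>}"

lemma simple_roots_subset_roots: "simple_roots \<subseteq> R"
  unfolding simple_roots_def positive_roots_def by auto

lemma finite_simple_roots: "finite simple_roots"
  using finite_subset[OF simple_roots_subset_roots finite_roots] .

lemma positive_or_negative_root: "\<alpha> \<in> R \<Longrightarrow> \<alpha> \<in> positive_roots \<or> - \<alpha> \<in> positive_roots"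
  using phi_root_nonzero[of \<alpha>] uminus_in_roots[of \<alpha>] linear_neg[OF linear_phi, of \<alpha>]
  unfolding positive_roots_def by auto

lemma positive_root_nonneg_combination:
  "\<alpha> \<in> positive_roots \<Longrightarrow>
    \<exists>k::'a \<Rightarrow> int. (\<forall>\<delta>\<in>simple_roots. 0 \<le> k \<delta>) \<and> \<alpha> = (\<Sum>\<delta>\<in>simple_roots. of_int (k \<delta>) *\<^sub>R \<delta>)"
proof (induction \<alpha> rule: measure_induct_rule[of "\<lambda>\<alpha>. card {\<gamma>\<in>R. \<phi> \<gamma> < \<phi> \<alpha>}"])
  case (less \<alpha>)
  show ?case
  proof (cases "decomposable \<alpha>")
    case False
    then have \<alpha>: "\<alpha> \<in> simple_roots" using less.prems unfolding simple_roots_def by auto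
    have "(\<Sum>\<delta>\<in>simple_roots. of_int (if \<delta> = \<alpha> then 1 else 0) *\<^sub>R \<delta>) =
          (\<Sum>\<delta>\<in>simple_roots. if \<delta> = \<alpha> then \<delta> else 0)"
      by (intro sum.cong) auto
    also have "\<dots> = \<alpha>" using \<alpha> finite_simple_roots by simp
    finally show ?thesis by (intro exI[of _ "\<lambda>\<delta>. if \<delta> = \<alpha> then 1 else 0"]) auto
  next
    case True
    then obtain \<beta> \<gamma> where \<beta>\<gamma>: "\<beta> \<in> positive_roots" "\<gamma> \<in> positive_roots" "\<alpha> = \<beta> + \<gamma>"
      unfolding decomposable_def by auto
    have smaller: "card {\<gamma>'\<in>R. \<phi> \<gamma>' < \<phi> x} < card {\<gamma>'\<in>R. \<phi> \<gamma>' < \<phi> \<alpha>}"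
      if "x \<in> positive_roots" "y \<in> positive_roots" "\<alpha> = x + y" for x y
    proof (rule psubset_card_mono)
      show "finite {\<gamma>'\<in>R. \<phi> \<gamma>' < \<phi> \<alpha>}" using finite_roots by simp
      have "\<phi> x < \<phi> \<alpha>" using that linear_add[OF linear_phi] unfolding positive_roots_def by auto
      then show "{\<gamma>'\<in>R. \<phi> \<gamma>' < \<phi> x} \<subset> {\<gamma>'\<in>R. \<phi> \<gamma>' < \<phi> \<alpha>}"
        using that(1) unfolding positive_roots_def by auto
    qed
    obtain k where k: "\<forall>\<delta>\<in>simple_roots. 0 \<le> k \<delta>" "\<beta> = (\<Sum>\<delta>\<in>simple_roots. of_int (k \<delta>) *\<^sub>R \<delta>)"
      using less.IH[OF smaller[OF \<beta>\<gamma>] \<beta>\<gamma>(1)] by blast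
    obtain l where l: "\<forall>\<delta>\<in>simple_roots. 0 \<le> l \<delta>" "\<gamma> = (\<Sum>\<delta>\<in>simple_roots. of_int (l \<delta>) *\<^sub>R \<delta>)"
      using less.IH[OF smaller[OF \<beta>\<gamma>(2,1)] \<beta>\<gamma>(2)] \<beta>\<gamma>(3) by (auto simp: add.commute)
    show ?thesis
      using k l \<beta>\<gamma>(3) by (intro exI[of _ "\<lambda>\<delta>. k \<delta> + l \<delta>"]) (auto simp: scaleR_add_left sum.distrib)
  qed
qed

lemma simple_root_not_sum:
  "\<delta> \<in> simple_roots \<Longrightarrow> \<beta> \<in> positive_roots \<Longrightarrow> \<gamma> \<in> positive_roots \<Longrightarrow> \<delta> \<noteq> \<beta> + \<gamma>"
  unfolding simple_roots_def decomposable_def by blast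

lemma diff_simple_roots_not_root:
  assumes "\<delta> \<in> simple_roots" "\<delta>' \<in> simple_roots" shows "\<delta>' - \<delta> \<notin> R"
proof
  assume diff: "\<delta>' - \<delta> \<in> R"
  have positive: "\<delta> \<in> positive_roots" "\<delta>' \<in> positive_roots"
    using assms unfolding simple_roots_def by auto
  show False
  proof (cases "0 < \<phi> (\<delta>' - \<delta>)")
    case True
    then have "\<delta>' - \<delta> \<in> positive_roots" using diff unfolding positive_roots_def by simp
    from simple_root_not_sum[OF assms(2) positive(1) this] show False by simp
  next
    case False
    then have "0 < \<phi> (\<delta> - \<delta>')"
      using phi_root_nonzero[OF diff] linear_diff[OF linear_phi] by fastforce
    moreover have "\<delta> - \<delta>' \<in> R" using uminus_in_roots[OF diff] by simp
    ultimately have "\<delta> - \<delta>' \<in> positive_roots" unfolding positive_roots_def by simp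
    from simple_root_not_sum[OF assms(1) positive(2) this] show False by simp
  qed
qed

lemma simple_roots_obtuse:
  assumes \<delta>: "\<delta> \<in> simple_roots" and \<delta>': "\<delta>' \<in> simple_roots" and "\<delta> \<noteq> \<delta>'"
  shows "invariant_form \<delta> \<delta>' \<le> 0"
proof (rule ccontr)
  have roots: "\<delta> \<in> R" "\<delta>' \<in> R" using \<delta> \<delta>' simple_roots_subset_roots by auto
  have not_parallel: "\<delta>' \<noteq> t *\<^sub>R \<delta>" for t
  proof
    assume \<delta>'_eq: "\<delta>' = t *\<^sub>R \<delta>"
    then have "t = 1 \<or> t = -1" using reduced roots unfolding reduced_root_system_def by auto
    moreover have "t \<noteq> 1" using \<delta>'_eq \<open>\<delta> \<noteq> \<delta>'\<close> by auto
    moreover have "\<phi> \<delta>' = t * \<phi> \<delta>" using \<delta>'_eq linear_scale[OF linear_phi] by simp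
    then have "t \<noteq> -1" using \<delta> \<delta>' unfolding simple_roots_def positive_roots_def by auto
    ultimately show False by auto
  qed
  assume "\<not> invariant_form \<delta> \<delta>' \<le> 0"
  then have "\<delta>' - \<delta> \<in> R" by (intro diff_in_roots_if_acute[OF roots not_parallel]) simp
  then show False using diff_simple_roots_not_root[OF \<delta> \<delta>'] by simp
qed

lemma positive_combination_of_positive_roots_nonzero:
  assumes "finite A" "A \<subseteq> positive_roots" "\<And>\<delta>. \<delta> \<in> A \<Longrightarrow> 0 < c \<delta>"
    and "(\<Sum>\<delta>\<in>A. c \<delta> *\<^sub>R \<delta>) = 0"
  shows "A = {}"
proof (rule ccontr)
  assume "A \<noteq> {}"
  then have "0 < (\<Sum>\<delta>\<in>A. c \<delta> * \<phi> \<delta>)"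
    using assms(1-3) unfolding positive_roots_def by (intro sum_pos) auto
  also have "(\<Sum>\<delta>\<in>A. c \<delta> * \<phi> \<delta>) = \<phi> (\<Sum>\<delta>\<in>A. c \<delta> *\<^sub>R \<delta>)"
    by (simp add: linear_sum[OF linear_phi] linear_scale[OF linear_phi])
  finally show False using assms(4) linear_0[OF linear_phi] by simp
qed

lemma independent_simple_roots: "independent simple_roots"
proof
  assume "dependent simple_roots"
  then obtain u where u: "\<exists>\<delta>\<in>simple_roots. u \<delta> \<noteq> 0" "(\<Sum>\<delta>\<in>simple_roots. u \<delta> *\<^sub>R \<delta>) = 0"
    using dependent_finite[OF finite_simple_roots] by auto
  define P where "P = {\<delta>\<in>simple_roots. 0 < u \<delta>}"
  define N where "N = {\<delta>\<in>simple_roots. u \<delta> < 0}"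
  have finite: "finite P" "finite N" using finite_simple_roots unfolding P_def N_def by auto
  have "(\<Sum>\<delta>\<in>simple_roots. u \<delta> *\<^sub>R \<delta>) = (\<Sum>\<delta>\<in>P \<union> N. u \<delta> *\<^sub>R \<delta>)"
    using finite_simple_roots by (intro sum.mono_neutral_right) (auto simp: P_def N_def)
  also have "\<dots> = (\<Sum>\<delta>\<in>P. u \<delta> *\<^sub>R \<delta>) + (\<Sum>\<delta>\<in>N. u \<delta> *\<^sub>R \<delta>)"
    using finite by (intro sum.union_disjoint) (auto simp: P_def N_def)
  finally have eq: "(\<Sum>\<delta>\<in>P. u \<delta> *\<^sub>R \<delta>) = (\<Sum>\<delta>\<in>N. (- u \<delta>) *\<^sub>R \<delta>)"
    using u(2) by (simp add: sum_negf eq_neg_iff_add_eq_0)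
  have P_zero: "(\<Sum>\<delta>\<in>P. u \<delta> *\<^sub>R \<delta>) = 0"
    by (rule nonneg_combinations_eq_0_if_obtuse[OF finite _ _ _ eq])
      (auto simp: P_def N_def intro: simple_roots_obtuse)
  have positive: "P \<subseteq> positive_roots" "N \<subseteq> positive_roots"
    unfolding P_def N_def simple_roots_def by auto
  have "P = {}"
    by (rule positive_combination_of_positive_roots_nonzero[OF finite(1) positive(1) _ P_zero])
      (simp add: P_def)
  moreover have "N = {}"
    by (rule positive_combination_of_positive_roots_nonzero[OF finite(2) positive(2), of "\<lambda>\<delta>. - u \<delta>"])
      (use eq P_zero in \<open>simp_all add: N_def\<close>)
  moreover obtain \<delta> where "\<delta> \<in> simple_roots" "u \<delta> \<noteq> 0" using u(1) by blast
  ultimately show False unfolding P_def N_def by (metis (mono_tags, lifting) empty_iff linorder_neqE mem_Collect_eq)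
qed

lemma is_base_simple_roots: "is_base R simple_roots"
  unfolding is_base_def
proof (intro conjI simple_roots_subset_roots independent_simple_roots ballI)
  fix \<beta> assume \<beta>: "\<beta> \<in> R"
  show "\<exists>c::'a \<Rightarrow> int. \<beta> = (\<Sum>\<delta>\<in>simple_roots. of_int (c \<delta>) *\<^sub>R \<delta>) \<and>
          ((\<forall>\<delta>\<in>simple_roots. 0 \<le> c \<delta>) \<or> (\<forall>\<delta>\<in>simple_roots. c \<delta> \<le> 0))"
  proof (cases "\<beta> \<in> positive_roots")
    case True
    then show ?thesis using positive_root_nonneg_combination by blast
  next
    case False
    then obtain k where k: "\<forall>\<delta>\<in>simple_roots. 0 \<le> k \<delta>" "- \<beta> = (\<Sum>\<delta>\<in>simple_roots. of_int (k \<delta>) *\<^sub>R \<delta>)"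
      using positive_or_negative_root[OF \<beta>] positive_root_nonneg_combination by blast
    then have "\<beta> = - (\<Sum>\<delta>\<in>simple_roots. of_int (k \<delta>) *\<^sub>R \<delta>)"
      by (metis minus_minus)
    also have "\<dots> = (\<Sum>\<delta>\<in>simple_roots. of_int (- k \<delta>) *\<^sub>R \<delta>)"
      by (simp add: sum_negf)
    finally have "\<beta> = (\<Sum>\<delta>\<in>simple_roots. of_int (- k \<delta>) *\<^sub>R \<delta>)" .
    then show ?thesis using k(1) by (intro exI[of _ "\<lambda>\<delta>. - k \<delta>"]) auto
  qed
qed

lemma simple_roots_image:
  assumes "linear \<tau>" "inj \<tau>" "\<tau> ` R = R" "\<And>\<alpha>. \<alpha> \<in> R \<Longrightarrow> \<phi> (\<tau> \<alpha>) = \<phi> \<alpha>"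
  shows "\<tau> ` simple_roots = simple_roots"
proof -
  have positive: "\<tau> \<alpha> \<in> positive_roots \<longleftrightarrow> \<alpha> \<in> positive_roots" if "\<alpha> \<in> R" for \<alpha>
    using that assms(3,4) unfolding positive_roots_def by auto
  have "\<tau> \<alpha> \<in> simple_roots" if \<alpha>: "\<alpha> \<in> simple_roots" for \<alpha>
  proof -
    have "\<tau> \<alpha> \<noteq> \<beta> + \<gamma>" if \<beta>\<gamma>: "\<beta> \<in> positive_roots" "\<gamma> \<in> positive_roots" for \<beta> \<gamma>
    proof
      assume sum: "\<tau> \<alpha> = \<beta> + \<gamma>"
      have "\<beta> \<in> \<tau> ` R" "\<gamma> \<in> \<tau> ` R" using \<beta>\<gamma> assms(3) unfolding positive_roots_def by auto
      then obtain \<beta>' \<gamma>' where \<beta>'\<gamma>': "\<beta>' \<in> R" "\<beta> = \<tau> \<beta>'" "\<gamma>' \<in> R" "\<gamma> = \<tau> \<gamma>'"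
        by (auto elim!: imageE)
      then have "\<tau> \<alpha> = \<tau> (\<beta>' + \<gamma>')" using sum linear_add[OF assms(1)] by simp
      then have "\<alpha> = \<beta>' + \<gamma>'" using injD[OF assms(2)] by blast
      moreover have "\<beta>' \<in> positive_roots" "\<gamma>' \<in> positive_roots"
        using positive \<beta>'\<gamma>' \<beta>\<gamma> by auto
      ultimately show False using simple_root_not_sum[OF \<alpha>] by blast
    qed
    then have "\<not> decomposable (\<tau> \<alpha>)" unfolding decomposable_def by blast
    moreover have "\<tau> \<alpha> \<in> positive_roots"
      using \<alpha> positive simple_roots_subset_roots unfolding simple_roots_def by auto
    ultimately show ?thesis unfolding simple_roots_def by simp
  qed
  then show ?thesis
    using endo_inj_surj[OF finite_simple_roots _ inj_on_subset[OF assms(2)]] by auto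
qed

end

context finite_root_system
begin

lemma nonvanishing_fixed_coweight_imp_fixed_base:
  assumes "reduced_root_system R" and \<sigma>: "root_aut R \<sigma>"
    and g: "g \<in> fixed_dual_lattice R \<sigma>" "\<forall>\<alpha>\<in>R. g \<alpha> \<noteq> 0"
  shows "\<exists>\<Delta>. is_base R \<Delta> \<and> \<sigma> ` \<Delta> = \<Delta>"
proof -
  have "g \<in> dual_lattice R" using g(1) unfolding fixed_dual_lattice_def by simp
  then obtain \<phi> :: "'a \<Rightarrow> real" where \<phi>: "linear \<phi>" "\<forall>\<alpha>\<in>R. \<phi> \<alpha> = of_int (g \<alpha>)"
    using dual_lattice_extends_linear by blast
  interpret positive_system R \<phi>
    by (rule positive_system.intro[OF finite_root_system_axioms positive_system_axioms.intro])
      (use assms(1) \<phi> g(2) in auto)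
  have "\<phi> (\<sigma> \<alpha>) = \<phi> \<alpha>" if \<alpha>: "\<alpha> \<in> R" for \<alpha>
  proof -
    have \<sigma>\<alpha>: "\<sigma> \<alpha> \<in> R" using \<alpha> \<sigma> unfolding root_aut_def by auto
    then have "g (inv_into UNIV \<sigma> (\<sigma> \<alpha>)) = g (\<sigma> \<alpha>)"
      using g(1) root_in_root_lattice unfolding fixed_dual_lattice_def by blast
    then show ?thesis using \<phi>(2) \<alpha> \<sigma>\<alpha> inv_f_f[OF inj_root_aut[OF \<sigma>]] by simp
  qed
  then have "\<sigma> ` simple_roots = simple_roots"
    using \<sigma> unfolding root_aut_def by (intro simple_roots_image inj_root_aut[OF \<sigma>]) auto
  with is_base_simple_roots show ?thesis by blast
qed

end

theorem mainTheorem2: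
  fixes R :: "'a::euclidean_space set" and \<sigma> :: "'a \<Rightarrow> 'a"
  assumes "reduced_root_system R" and "irreducible_root_system R"
    and "root_aut R \<sigma>"
  shows "(\<exists>\<Delta>. is_base R \<Delta> \<and> \<sigma> ` \<Delta> = \<Delta>) \<longleftrightarrow>
         \<not> (\<exists>\<alpha>\<in>R. \<forall>f\<in>fixed_dual_lattice R \<sigma>. f \<alpha> = 0)"
proof -
  interpret finite_root_system R
    using assms(1) unfolding reduced_root_system_def by unfold_locales blast
  show ?thesis
  proof
    assume "\<exists>\<Delta>. is_base R \<Delta> \<and> \<sigma> ` \<Delta> = \<Delta>"
    then obtain \<Delta> where "is_base R \<Delta>" "\<sigma> ` \<Delta> = \<Delta>" by blast
    then obtain f where "f \<in> fixed_dual_lattice R \<sigma>" "\<forall>\<alpha>\<in>R. f \<alpha> \<noteq> 0"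
      using fixed_base_imp_nonvanishing_fixed_coweight[OF assms(3)] by blast
    then show "\<not> (\<exists>\<alpha>\<in>R. \<forall>f\<in>fixed_dual_lattice R \<sigma>. f \<alpha> = 0)" by blast
  next
    assume "\<not> (\<exists>\<alpha>\<in>R. \<forall>f\<in>fixed_dual_lattice R \<sigma>. f \<alpha> = 0)"
    then have "\<exists>f\<in>fixed_dual_lattice R \<sigma>. f \<alpha> \<noteq> 0" if "\<alpha> \<in> R" for \<alpha>
      using that by blast
    then obtain g where "g \<in> fixed_dual_lattice R \<sigma>" "\<forall>\<alpha>\<in>R. g \<alpha> \<noteq> 0"
      using int_module_nonvanishing_member[OF fixed_dual_lattice_zero fixed_dual_lattice_comb finite_roots]
      by metis
    then show "\<exists>\<Delta>. is_base R \<Delta> \<and> \<sigma> ` \<Delta> = \<Delta>"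
      by (rule nonvanishing_fixed_coweight_imp_fixed_base[OF assms(1,3)])
  qed
qed

end
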